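(* Let $q$ be a prime power and let $n$ be an odd positive integer coprime to $q$. Then $x-1$ is the only SCRIM factor of $x^{n}-1$ in $\mathbb{F}_{q^2}[x]$ if and only if for every prime divisor $l$ of $n$, $\mathrm{ord}_l(q^2)$ is even or $\mathrm{ord}_l(q)$ is odd.
   Context: $\mathbb{F}_{q^2}$ is the finite field with $q^2$ elements. For $\alpha\in\mathbb{F}_{q^2}$ put $\bar\alpha=\alpha^q$, and for $f(x)=\sum_i f_ix^i$ put $\overline{f(x)}=\sum_i \bar f_i x^i$. For $f(x)$ with $f(0)\neq 0$, $f^*(x)=x^{\deg f}f(0)^{-1}f(1/x)$ and $f^\dagger(x)=\overline{f^*(x)}$. A polynomial is SCRIM if it is monic, irreducible over $\mathbb{F}_{q^2}$, has nonzero constant term, and satisfies $f=f^\dagger$. A SCRIM factor of $x^n-1$ is a SCRIM polynomial dividing $x^n-1$ in $\mathbb{F}_{q^2}[x]$. $\mathrm{ord}_l(a)$ denotes the multiplicative order of $a$ modulo $l$. *)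

theory Defs
  imports "HOL-Computational_Algebra.Computational_Algebra" "HOL-Number_Theory.Pocklington"
begin

text \<open>Conjugation on F_{q^2}: a bar = a^q, extended coefficientwise to polynomials.\<close>
definition conj_poly :: "nat \<Rightarrow> 'a::field poly \<Rightarrow> 'a poly" where
  "conj_poly q f = map_poly (\<lambda>a. a ^ q) f"

definition recip_poly :: "'a::field poly \<Rightarrow> 'a poly" where
  "recip_poly f = Polynomial.smult (inverse (Polynomial.coeff f 0)) (reflect_poly f)"

definition dagger_poly :: "nat \<Rightarrow> 'a::field poly \<Rightarrow> 'a poly" where
  "dagger_poly q f = conj_poly q (recip_poly f)"

definition SCRIM :: "nat \<Rightarrow> 'a::field poly \<Rightarrow> bool" where
  "SCRIM q f \<longleftrightarrow> lead_coeff f = 1 \<and> irreducible f \<and> Polynomial.coeff f 0 \<noteq> 0 \<and> f = dagger_poly q f"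

end

theory Submission
  imports Defs "HOL-Algebra.Algebraic_Closure_Type" "HOL-Library.Cardinality"
begin

(* Work in the algebraic closure of F = F_{q^2}. The roots of a monic irreducible f over F
   with f(0) \<noteq> 0 form one orbit alpha, alpha^(q^2), alpha^(q^4), ... under the Frobenius
   of F, and f-dagger vanishes at beta^(-q) whenever f vanishes at beta. Hence f is SCRIM iff
   alpha^(-q) = alpha^(q^(2i)) for some i, i.e. iff the order of alpha divides q^(2i) + q.
   For a root alpha \<noteq> 1 of x^n - 1 this gives a prime l | n with l | q^j + 1 for an odd j;
   conversely, for such l the minimal polynomial of a primitive l-th root of unity is a SCRIM
   factor other than x - 1. Finally, for an odd prime l not dividing q, l | q^j + 1 for some
   odd j iff ord_l(q) is even and ord_l(q^2) = ord_l(q)/2 is odd. *)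

hide_const (open) Divisibility.prime Divisibility.irreducible module.smult
  Polynomials.lead_coeff Polynomials.degree up_ring.coeff up_ring.monom

section \<open>Ring homomorphisms acting on polynomials\<close>

locale comm_ring_hom =
  fixes h :: "'a::comm_ring_1 \<Rightarrow> 'b::comm_ring_1"
  assumes hom_add: "h (x + y) = h x + h y"
    and hom_mult: "h (x * y) = h x * h y"
    and hom_1: "h 1 = 1"
begin

lemma hom_0: "h 0 = 0"
  using hom_add[of 0 0] by simp

lemma hom_uminus: "h (- x) = - h x"
  using hom_add[of x "- x"] by (simp add: hom_0 add.inverse_unique)

lemma hom_diff: "h (x - y) = h x - h y"
  using hom_add[of x "- y"] by (simp add: hom_uminus)

lemma map_poly_add: "map_poly h (p + r) = map_poly h p + map_poly h r"
  by (intro poly_eqI) (simp add: coeff_map_poly hom_0 hom_add)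

lemma map_poly_diff: "map_poly h (p - r) = map_poly h p - map_poly h r"
  by (intro poly_eqI) (simp add: coeff_map_poly hom_0 hom_diff)

lemma map_poly_mult: "map_poly h (p * r) = map_poly h p * map_poly h r"
proof (induction p)
  case (pCons c p)
  then show ?case
    by (simp add: map_poly_add map_poly_smult map_poly_pCons hom_0 hom_mult)
qed simp

lemma map_poly_prod: "map_poly h (\<Prod>i\<in>A. g i) = (\<Prod>i\<in>A. map_poly h (g i))"
  by (induction A rule: infinite_finite_induct) (simp_all add: map_poly_mult hom_1)

lemma poly_map_poly: "poly (map_poly h p) (h x) = h (poly p x)"
  by (induction p) (simp_all add: map_poly_pCons hom_0 hom_add hom_mult)

end

interpretation to_ac: comm_ring_hom "to_ac :: 'a::field \<Rightarrow> 'a alg_closure"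
  by unfold_locales simp_all

section \<open>Frobenius maps and finite fields\<close>

lemma comm_ring_hom_power_CHAR:
  assumes "prime CHAR('a::comm_ring_1)"
  shows "comm_ring_hom (\<lambda>x::'a. x ^ (CHAR('a) ^ m))"
  by unfold_locales (simp_all add: freshmans_dream'[OF assms refl] power_mult_distrib)

lemma power_CHAR_inj:
  fixes x y :: "'a::idom"
  assumes "prime CHAR('a)" and "x ^ (CHAR('a) ^ m) = y ^ (CHAR('a) ^ m)"
  shows "x = y"
proof -
  interpret frob: comm_ring_hom "\<lambda>x::'a. x ^ (CHAR('a) ^ m)"
    by (rule comm_ring_hom_power_CHAR[OF assms(1)])
  have "(x - y) ^ (CHAR('a) ^ m) = 0"
    using frob.hom_add[of x "- y"] assms(2) by (simp add: frob.hom_uminus)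
  then show ?thesis by simp
qed

lemma poly_to_ac_frobenius:
  fixes f :: "'a::field poly"
  assumes "prime CHAR('a)"
  shows "poly (map_poly to_ac (map_poly (\<lambda>c. c ^ (CHAR('a) ^ m)) f)) (z ^ (CHAR('a) ^ m))
           = poly (map_poly to_ac f) z ^ (CHAR('a) ^ m)"
proof -
  interpret frob: comm_ring_hom "\<lambda>x::'a alg_closure. x ^ (CHAR('a) ^ m)"
    using comm_ring_hom_power_CHAR[where 'a = "'a alg_closure"] assms by simp
  have "map_poly to_ac (map_poly (\<lambda>c. c ^ (CHAR('a) ^ m)) f)
          = map_poly (\<lambda>x. x ^ (CHAR('a) ^ m)) (map_poly to_ac f)"
    using frob.hom_0 by (simp add: map_poly_map_poly o_def)
  then show ?thesis
    by (simp add: frob.poly_map_poly)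
qed

lemma prime_CHAR_finite_field: "prime CHAR('a::{finite,field})"
  by (intro prime_CHAR_semidom finite_imp_CHAR_pos) simp

lemma CHAR_eq_if_card_eq_prime_power:
  assumes "prime p" and "CARD('a::{finite,field}) = p ^ m"
  shows "CHAR('a) = p"
proof -
  have "CHAR('a) dvd p ^ m"
    using CHAR_dvd_CARD[where 'a = 'a] assms(2) by simp
  then have "CHAR('a) dvd p"
    using prime_CHAR_finite_field prime_dvd_power by blast
  then show ?thesis
    using prime_CHAR_finite_field assms(1) primes_dvd_imp_eq by blast
qed

lemma power_card_finite_field: "(x :: 'a::{finite,field}) ^ CARD('a) = x"
proof (cases "x = 0")
  case False
  interpret R: field "ring_of_type_algebra :: 'a ring"
    by (rule field_from_type_algebra)
  have units: "Units (ring_of_type_algebra :: 'a ring) = UNIV - {0}"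
    using R.field_Units by (simp add: ring_of_type_algebra_def)
  have pow: "y [^]\<^bsub>ring_of_type_algebra :: 'a ring\<^esub> (n::nat) = y ^ n" for y :: 'a and n
    by (induction n) (simp_all add: ring_of_type_algebra_def)
  have "x ^ (CARD('a) - 1) = 1"
    using R.units_power_order_eq_one[of x] False
    by (simp add: units pow) (simp add: ring_of_type_algebra_def)
  then show ?thesis
    by (metis finite_UNIV_card_ge_0 finite power_minus_mult mult_1)
qed (simp add: finite_UNIV_card_ge_0)

lemma power_card_power_finite_field: "(x :: 'a::{finite,field}) ^ (CARD('a) ^ i) = x"
  by (induction i) (simp_all add: power_card_finite_field power_mult)

lemma poly_to_ac_power_card_power:
  fixes f :: "'a::{finite,field} poly"
  assumes "CARD('a) = CHAR('a) ^ m"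
  shows "poly (map_poly to_ac f) (z ^ (CARD('a) ^ i)) = poly (map_poly to_ac f) z ^ (CARD('a) ^ i)"
proof -
  have "map_poly (\<lambda>c. c ^ (CHAR('a) ^ (m * i))) f = f"
    by (intro map_poly_idI) (simp add: power_mult assms [symmetric] power_card_power_finite_field)
  then show ?thesis
    using poly_to_ac_frobenius[OF prime_CHAR_finite_field, of "m * i" f z]
    by (simp add: power_mult assms)
qed

lemma range_to_ac_finite_field:
  "range (to_ac :: 'a::{finite,field} \<Rightarrow> 'a alg_closure) = {z. z ^ CARD('a) = z}"
proof (rule card_subset_eq)
  have "card {0, 1 :: 'a} \<le> CARD('a)"
    by (rule card_mono) simp_all
  then have card: "CARD('a) \<ge> 2" by simp
  define R :: "'a alg_closure poly" where "R = monom 1 CARD('a) - monom 1 1"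
  have "coeff R CARD('a) = 1"
    using card by (simp add: R_def)
  then have "R \<noteq> 0" by auto
  moreover have "degree R \<le> CARD('a)"
    unfolding R_def using card by (intro degree_diff_le) (simp_all add: degree_monom_eq)
  moreover have roots: "{z. poly R z = 0} = {z. z ^ CARD('a) = z}"
    by (simp add: R_def poly_monom)
  ultimately have "card {z :: 'a alg_closure. z ^ CARD('a) = z} \<le> CARD('a)"
    using card_poly_roots_bound[of R] by simp
  moreover show fin: "finite {z :: 'a alg_closure. z ^ CARD('a) = z}"
    using poly_roots_finite[OF \<open>R \<noteq> 0\<close>] roots by simp
  moreover show sub: "range (to_ac :: 'a \<Rightarrow> _) \<subseteq> {z. z ^ CARD('a) = z}"
    by (auto simp flip: to_ac_power simp: power_card_finite_field)
  ultimately show "card (range (to_ac :: 'a \<Rightarrow> _)) = card {z :: 'a alg_closure. z ^ CARD('a) = z}"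
    using card_mono[OF fin sub] by (simp add: card_image inj_to_ac)
qed

lemma map_poly_to_ac_of_ac_if_frobenius_fixed:
  fixes h :: "'a::{finite,field} alg_closure poly"
  assumes "map_poly (\<lambda>z. z ^ CARD('a)) h = h"
  shows "map_poly to_ac (map_poly of_ac h) = h"
proof (rule poly_eqI)
  fix i
  have "coeff h i ^ CARD('a) = coeff h i"
    using arg_cong[OF assms, of "\<lambda>p. coeff p i"] by (simp add: coeff_map_poly)
  then show "coeff (map_poly to_ac (map_poly of_ac h)) i = coeff h i"
    by (simp add: coeff_map_poly to_ac_of_ac range_to_ac_finite_field)
qed

section \<open>Roots in the algebraic closure\<close>

lemma irreducible_if_dvd_all_with_root:
  fixes m :: "'a::field poly"
  assumes "m \<noteq> 0" "poly (map_poly to_ac m) \<alpha> = 0"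
    and dvd: "\<And>p. poly (map_poly to_ac p) \<alpha> = 0 \<Longrightarrow> m dvd p"
  shows "irreducible m"
proof (rule Factorial_Ring.irreducibleI)
  show "\<not> is_unit m"
    using assms(2) by (auto simp: is_unit_poly_iff map_poly_pCons)
  fix a b assume ab: "m = a * b"
  then have "a \<noteq> 0" "b \<noteq> 0"
    using assms(1) by auto
  have "poly (map_poly to_ac a) \<alpha> = 0 \<or> poly (map_poly to_ac b) \<alpha> = 0"
    using assms(2) unfolding ab by (simp add: to_ac.map_poly_mult)
  then have "m dvd a \<or> m dvd b"
    using dvd by blast
  then have "degree m \<le> degree a \<or> degree m \<le> degree b"
    using dvd_imp_degree_le \<open>a \<noteq> 0\<close> \<open>b \<noteq> 0\<close> by blast
  moreover have "degree m = degree a + degree b"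
    using ab \<open>a \<noteq> 0\<close> \<open>b \<noteq> 0\<close> by (simp add: degree_mult_eq)
  ultimately show "is_unit a \<or> is_unit b"
    using \<open>a \<noteq> 0\<close> \<open>b \<noteq> 0\<close> is_unit_iff_degree by auto
qed (use assms(1) in simp)

lemma minimal_polynomial_exists:
  fixes g :: "'a::field poly"
  assumes "g \<noteq> 0" "poly (map_poly to_ac g) \<alpha> = 0"
  obtains m where "irreducible m" "lead_coeff m = 1" "poly (map_poly to_ac m) \<alpha> = 0"
    "\<And>p. poly (map_poly to_ac p) \<alpha> = 0 \<Longrightarrow> m dvd p"
proof -
  obtain m0 where m0: "m0 \<noteq> 0" "poly (map_poly to_ac m0) \<alpha> = 0"
    and least: "\<And>p. p \<noteq> 0 \<Longrightarrow> poly (map_poly to_ac p) \<alpha> = 0 \<Longrightarrow> degree m0 \<le> degree p"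
    using ex_has_least_nat[of "\<lambda>p. p \<noteq> 0 \<and> poly (map_poly to_ac p) \<alpha> = 0" g degree] assms
    by blast
  define m where "m = smult (inverse (lead_coeff m0)) m0"
  have m: "m \<noteq> 0" "degree m = degree m0" "lead_coeff m = 1" "poly (map_poly to_ac m) \<alpha> = 0"
    using m0 by (simp_all add: m_def map_poly_smult)
  have dvd: "m dvd p" if "poly (map_poly to_ac p) \<alpha> = 0" for p
  proof (rule ccontr)
    assume "\<not> m dvd p"
    then have "p mod m \<noteq> 0" "degree (p mod m) < degree m"
      using degree_mod_less' m(1) by (auto simp: mod_eq_0_iff_dvd)
    moreover have "map_poly to_ac p
        = map_poly to_ac (p div m) * map_poly to_ac m + map_poly to_ac (p mod m)"
      by (metis div_mult_mod_eq to_ac.map_poly_add to_ac.map_poly_mult)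
    then have "poly (map_poly to_ac (p mod m)) \<alpha> = 0"
      using that m(4) by (metis add_0 mult_zero_right poly_add poly_mult)
    ultimately show False
      using least m(2) by fastforce
  qed
  show thesis
    using that irreducible_if_dvd_all_with_root[OF m(1,4) dvd] m(3,4) dvd by blast
qed

lemma irreducible_dvd_if_common_root:
  fixes f g :: "'a::field poly"
  assumes "irreducible f"
    and "poly (map_poly to_ac f) \<alpha> = 0" "poly (map_poly to_ac g) \<alpha> = 0"
  shows "f dvd g"
proof -
  obtain m where m: "irreducible m" "\<And>p. poly (map_poly to_ac p) \<alpha> = 0 \<Longrightarrow> m dvd p"
    using minimal_polynomial_exists[OF _ assms(2)] assms(1) not_irreducible_zero by blast
  obtain r where "f = m * r"
    using m(2)[OF assms(2)] by blast
  then have "is_unit r"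
    using assms(1) m(1) by (meson Factorial_Ring.irreducibleD irreducible_not_unit)
  then have "f dvd m"
    using \<open>f = m * r\<close> by simp
  then show ?thesis
    using m(2)[OF assms(3)] by (rule dvd_trans)
qed

lemma monic_dvd_imp_eq:
  fixes f g :: "'a::field poly"
  assumes "lead_coeff f = 1" "lead_coeff g = 1" "f dvd g" "degree g \<le> degree f"
  shows "f = g"
proof -
  obtain r where r: "g = f * r"
    using assms(3) by blast
  have "f \<noteq> 0" "r \<noteq> 0"
    using r assms(2) by auto
  then have "degree r = 0"
    using r assms(4) by (simp add: degree_mult_eq)
  then obtain c where "r = [:c:]"
    by (metis degree_eq_zeroE)
  moreover have "lead_coeff g = lead_coeff f * c"
    using r \<open>r = [:c:]\<close> by (simp add: lead_coeff_mult)
  then have "c = 1"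
    using assms(1,2) by simp
  ultimately show ?thesis
    using r by simp
qed

lemma prod_linear_factors_frobenius_stable:
  fixes S :: "'a::{finite,field} alg_closure set"
  assumes card: "CARD('a) = CHAR('a) ^ m"
    and inj: "inj_on (\<lambda>z. z ^ CARD('a)) S" and stable: "(\<lambda>z. z ^ CARD('a)) ` S = S"
  shows "map_poly to_ac (map_poly of_ac (\<Prod>s\<in>S. [:- s, 1:])) = (\<Prod>s\<in>S. [:- s, 1:])"
proof (rule map_poly_to_ac_of_ac_if_frobenius_fixed)
  interpret frob: comm_ring_hom "\<lambda>z::'a alg_closure. z ^ CARD('a)"
    using comm_ring_hom_power_CHAR[where 'a = "'a alg_closure", of m] prime_CHAR_finite_field[where 'a = 'a]
    by (simp add: card)
  have "map_poly (\<lambda>z. z ^ CARD('a)) (\<Prod>s\<in>S. [:- s, 1:]) = (\<Prod>s\<in>S. [:- (s ^ CARD('a)), 1:])"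
    by (simp add: frob.map_poly_prod map_poly_pCons frob.hom_0 frob.hom_1 frob.hom_uminus)
  also have "\<dots> = (\<Prod>s\<in>(\<lambda>z. z ^ CARD('a)) ` S. [:- s, 1:])"
    by (simp add: prod.reindex[OF inj])
  finally show "map_poly (\<lambda>z. z ^ CARD('a)) (\<Prod>s\<in>S. [:- s, 1:]) = (\<Prod>s\<in>S. [:- s, 1:])"
    using stable by simp
qed

lemma roots_irreducible_finite_field:
  fixes f :: "'a::{finite,field} poly"
  assumes card: "CARD('a) = CHAR('a) ^ m" and "irreducible f"
    and \<alpha>: "poly (map_poly to_ac f) \<alpha> = 0" and \<beta>: "poly (map_poly to_ac f) \<beta> = 0"
  obtains i where "\<beta> = \<alpha> ^ (CARD('a) ^ i)"
proof -
  define S where "S = range (\<lambda>i. \<alpha> ^ (CARD('a) ^ i))"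
  define h where "h = (\<Prod>s\<in>S. [:- s, 1:])"
  have "map_poly to_ac f \<noteq> 0"
    using \<open>irreducible f\<close> by (auto simp: map_poly_eq_0_iff)
  moreover have "S \<subseteq> {z. poly (map_poly to_ac f) z = 0}"
    using \<alpha> by (auto simp: S_def poly_to_ac_power_card_power[OF card])
  ultimately have "finite S"
    using poly_roots_finite finite_subset by blast
  moreover have "(\<alpha> ^ (CARD('a) ^ i)) ^ CARD('a) \<in> S" for i
    unfolding S_def by (rule range_eqI[of _ _ "Suc i"]) (simp flip: power_mult add: mult.commute)
  then have "(\<lambda>z. z ^ CARD('a)) ` S \<subseteq> S"
    by (auto simp: S_def)
  moreover have inj: "inj_on (\<lambda>z. z ^ CARD('a)) S"
    using power_CHAR_inj[where 'a = "'a alg_closure"] prime_CHAR_finite_field[where 'a = 'a]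
    by (intro inj_onI) (auto simp: card)
  ultimately have "(\<lambda>z. z ^ CARD('a)) ` S = S"
    by (rule endo_inj_surj)
  then have h: "map_poly to_ac (map_poly of_ac h) = h"
    unfolding h_def by (rule prod_linear_factors_frobenius_stable[OF card inj])
  have "\<alpha> \<in> S"
    unfolding S_def by (metis power_0 power_one_right rangeI)
  then have "poly h \<alpha> = 0"
    using \<open>finite S\<close> by (auto simp: h_def poly_prod)
  then have "f dvd map_poly of_ac h"
    using irreducible_dvd_if_common_root[OF \<open>irreducible f\<close> \<alpha>] h by simp
  then have "poly h \<beta> = 0"
    using \<beta> h by (metis dvdE mult_zero_left poly_mult to_ac.map_poly_mult)
  then have "\<beta> \<in> S"
    using \<open>finite S\<close> by (auto simp: h_def poly_prod)
  then show thesis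
    using that by (auto simp: S_def)
qed

lemma nontrivial_root_of_unity_of_factor:
  fixes f :: "'a::field poly"
  assumes "irreducible f" "lead_coeff f = 1" "f dvd monom 1 n - 1" "f \<noteq> [:-1, 1:]"
  obtains \<alpha> where "poly (map_poly to_ac f) \<alpha> = 0" "\<alpha> ^ n = 1" "\<alpha> \<noteq> 1"
proof -
  have "f \<noteq> 0" "\<not> is_unit f"
    using assms(1) by (auto simp: irreducible_not_unit)
  then have "degree (map_poly to_ac f) > 0"
    by (simp add: degree_map_poly is_unit_iff_degree)
  then obtain \<alpha> where \<alpha>: "poly (map_poly to_ac f) \<alpha> = 0"
    using alg_closed_imp_poly_has_root by blast
  obtain r where "monom 1 n - 1 = f * r"
    using assms(3) by blast
  then have "poly (map_poly to_ac (monom 1 n - 1)) \<alpha> = 0"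
    using \<alpha> by (simp add: to_ac.map_poly_mult)
  then have "\<alpha> ^ n = 1"
    by (simp add: to_ac.map_poly_diff map_poly_monom poly_monom)
  moreover have "\<alpha> \<noteq> 1"
  proof
    assume "\<alpha> = 1"
    then have "f dvd [:-1, 1:]"
      using irreducible_dvd_if_common_root[OF assms(1) \<alpha>] by (simp add: map_poly_pCons)
    moreover have "degree [:-1, 1 :: 'a:] \<le> degree f"
      using \<open>f \<noteq> 0\<close> \<open>\<not> is_unit f\<close> by (simp add: is_unit_iff_degree)
    ultimately show False
      using monic_dvd_imp_eq[OF assms(2)] assms(4) by simp
  qed
  ultimately show thesis
    using that \<alpha> by blast
qed

lemma nontrivial_root_of_unity_exists:
  assumes "l > 1" and "\<not> CHAR('a::alg_closed_field) dvd l"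
  obtains \<alpha> :: "'a::alg_closed_field" where "\<alpha> ^ l = 1" "\<alpha> \<noteq> 1"
proof -
  define P :: "'a poly" where "P = (\<Sum>i<l. monom 1 i)"
  have "coeff P (l - 1) = 1"
    using assms(1) by (simp add: P_def coeff_sum)
  then have "degree P > 0"
    using assms(1) le_degree[of P "l - 1"] by simp
  then obtain \<alpha> where "poly P \<alpha> = 0"
    using alg_closed_imp_poly_has_root by blast
  then have sum: "(\<Sum>i<l. \<alpha> ^ i) = 0"
    by (simp add: P_def poly_sum poly_monom)
  show thesis
  proof
    show "\<alpha> ^ l = 1"
      using power_diff_1_eq[of \<alpha> l] sum by simp
    show "\<alpha> \<noteq> 1"
      using sum assms(2) by (auto simp: of_nat_eq_0_iff_char_dvd)
  qed
qed

lemma inverse_power_eq_if_dvd_odd_power_plus_1: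
  fixes \<alpha> :: "'a::field"
  assumes "\<alpha> ^ l = 1" and "odd j" and "l dvd q ^ j + 1"
  shows "inverse \<alpha> ^ q = \<alpha> ^ ((q ^ 2) ^ Suc (j div 2))"
proof -
  obtain c where c: "q ^ j + 1 = l * c"
    using assms(3) by blast
  have "\<alpha> * \<alpha> ^ (q ^ j) = (\<alpha> ^ l) ^ c"
    by (simp flip: power_Suc power_mult c)
  then have inv: "inverse \<alpha> = \<alpha> ^ (q ^ j)"
    using assms(1) by (simp add: inverse_unique)
  have "Suc j = 2 * Suc (j div 2)"
    using assms(2) by presburger
  then have "q ^ j * q = (q ^ 2) ^ Suc (j div 2)"
    by (metis power_Suc2 power_mult)
  then show ?thesis
    unfolding inv by (simp flip: power_mult)
qed

section \<open>Self-conjugate-reciprocal polynomials\<close>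

lemma degree_dagger_poly:
  assumes "coeff f 0 \<noteq> 0" and "q > 0"
  shows "degree (dagger_poly q f) = degree (f :: 'a::field poly)"
  using assms by (simp add: dagger_poly_def conj_poly_def recip_poly_def degree_map_poly)

lemma lead_coeff_dagger_poly:
  assumes "coeff f 0 \<noteq> 0" and "q > 0"
  shows "lead_coeff (dagger_poly q f) = (1 :: 'a::field)"
  using assms by (simp add: degree_dagger_poly)
    (simp add: dagger_poly_def conj_poly_def recip_poly_def coeff_map_poly coeff_reflect_poly)

lemma poly_dagger_poly_inverse_power:
  fixes f :: "'a::field poly"
  assumes "prime CHAR('a)" and q: "q = CHAR('a) ^ k"
    and "coeff f 0 \<noteq> 0" and \<rho>: "poly (map_poly to_ac f) \<rho> = 0"
  shows "poly (map_poly to_ac (dagger_poly q f)) (inverse \<rho> ^ q) = 0"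
proof -
  have "\<rho> \<noteq> 0"
    using \<rho> assms(3) by (auto simp: poly_0_coeff_0 coeff_map_poly)
  have "map_poly to_ac (reflect_poly f) = reflect_poly (map_poly to_ac f)"
    by (intro poly_eqI) (simp add: coeff_reflect_poly coeff_map_poly degree_map_poly)
  then have "map_poly to_ac (recip_poly f) =
      smult (to_ac (inverse (coeff f 0))) (reflect_poly (map_poly to_ac f))"
    by (simp add: recip_poly_def map_poly_smult)
  then have "poly (map_poly to_ac (recip_poly f)) (inverse \<rho>) = 0"
    using \<open>\<rho> \<noteq> 0\<close> \<rho> by (simp add: poly_reflect_poly_nz)
  then show ?thesis
    using poly_to_ac_frobenius[OF assms(1), of k "recip_poly f" "inverse \<rho>"] q
    by (simp add: dagger_poly_def conj_poly_def prime_gt_0_nat assms(1))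
qed

lemma SCRIM_iff_root_inverse_power:
  fixes f :: "'a::{finite,field} poly"
  assumes q: "q = CHAR('a) ^ k" and card: "CARD('a) = q ^ 2"
    and f: "irreducible f" "lead_coeff f = 1" "coeff f 0 \<noteq> 0"
    and \<alpha>: "poly (map_poly to_ac f) \<alpha> = 0"
  shows "SCRIM q f \<longleftrightarrow> poly (map_poly to_ac f) (inverse \<alpha> ^ q) = 0"
proof
  assume "SCRIM q f"
  then show "poly (map_poly to_ac f) (inverse \<alpha> ^ q) = 0"
    using poly_dagger_poly_inverse_power[OF prime_CHAR_finite_field q f(3) \<alpha>]
    by (simp add: SCRIM_def)
next
  assume root: "poly (map_poly to_ac f) (inverse \<alpha> ^ q) = 0"
  have "inverse (inverse \<alpha> ^ q) ^ q = \<alpha> ^ CARD('a) ^ 1"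
    by (simp add: card power2_eq_square power_mult power_inverse)
  then have "poly (map_poly to_ac (dagger_poly q f)) (\<alpha> ^ CARD('a) ^ 1) = 0"
    using poly_dagger_poly_inverse_power[OF prime_CHAR_finite_field q f(3) root] by simp
  then have "poly (map_poly to_ac (dagger_poly q f)) \<alpha> = 0"
    by (subst (asm) poly_to_ac_power_card_power[of "k * 2"]) (simp_all add: card q power_mult)
  then have dvd: "f dvd dagger_poly q f"
    by (rule irreducible_dvd_if_common_root[OF f(1) \<alpha>])
  have "q > 0"
    using q prime_CHAR_finite_field[where 'a = 'a] prime_gt_0_nat by simp
  have "f = dagger_poly q f"
    by (rule monic_dvd_imp_eq[OF f(2) lead_coeff_dagger_poly[OF f(3) \<open>q > 0\<close>] dvd])
      (simp add: degree_dagger_poly[OF f(3) \<open>q > 0\<close>])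
  then show "SCRIM q f"
    using f by (simp add: SCRIM_def)
qed

lemma SCRIM_X_minus_1:
  assumes "q = CHAR('a::{finite,field}) ^ k" and "CARD('a) = q ^ 2"
  shows "SCRIM q [:-1, 1 :: 'a:]"
  using SCRIM_iff_root_inverse_power[OF assms, of "[:-1, 1:]" 1]
  by (simp add: irreducible_linear_field_poly map_poly_pCons)

section \<open>Orders modulo a prime\<close>

lemma power_gcd_eq_1:
  fixes x :: "'a::monoid_mult"
  assumes "x ^ m = 1" and "x ^ n = 1"
  shows "x ^ gcd m n = 1"
proof (cases "m = 0")
  case False
  then obtain a b where "m * a = n * b + gcd m n"
    using bezout_nat by blast
  then have "x ^ (m * a) = x ^ (n * b) * x ^ gcd m n"
    by (simp add: power_add)
  then show ?thesis
    using assms by (simp add: power_mult)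
qed (use assms in simp)

lemma dvd_odd_power_plus_1_if_dvd_even_power_plus:
  fixes l q i :: nat
  assumes "coprime l q" and "l dvd q ^ (2 * i) + q"
  obtains j where "odd j" "l dvd q ^ j + 1"
proof (cases "i = 0")
  case True
  then show thesis
    using that[of 1] assms(2) by (simp add: add.commute)
next
  case False
  then have "q ^ (2 * i) + q = q * (q ^ (2 * i - 1) + 1)"
    by (simp add: algebra_simps flip: power_Suc)
  then have "l dvd q ^ (2 * i - 1) + 1"
    using assms coprime_dvd_mult_right_iff by metis
  moreover have "odd (2 * i - 1)"
    using False by presburger
  ultimately show thesis
    using that by blast
qed

lemma prime_dvd_power_plus_1_iff_ord:
  fixes l q n :: nat
  assumes "prime l" and "l \<noteq> 2"
  shows "l dvd q ^ n + 1 \<longleftrightarrow> ord l q dvd 2 * n \<and> \<not> ord l q dvd n"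
proof -
  define x where "x = int q ^ n"
  have cong: "[q ^ m = 1] (mod l) \<longleftrightarrow> int l dvd int q ^ m - 1" for m
    by (metis cong_iff_dvd_diff cong_int_iff of_nat_1 of_nat_power)
  have "[q ^ (2 * n) = 1] (mod l) \<longleftrightarrow> int l dvd (x - 1) * (x + 1)"
    unfolding cong by (simp add: x_def power_mult algebra_simps power2_eq_square)
  also have "\<dots> \<longleftrightarrow> int l dvd x - 1 \<or> int l dvd x + 1"
    using assms(1) by (simp add: prime_dvd_mult_iff)
  finally have square: "[q ^ (2 * n) = 1] (mod l) \<longleftrightarrow> int l dvd x - 1 \<or> int l dvd x + 1" .
  have not_both: "\<not> (int l dvd x - 1 \<and> int l dvd x + 1)"
  proof
    assume "int l dvd x - 1 \<and> int l dvd x + 1"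
    then have "int l dvd (x + 1) - (x - 1)"
      using dvd_diff by blast
    then have "int l dvd 2"
      by simp
    then have "l dvd 2"
      by (metis int_dvd_int_iff of_nat_numeral)
    then show False
      using dvd_imp_le[of l 2] prime_ge_2_nat[OF assms(1)] assms(2) by simp
  qed
  have "[q ^ n = 1] (mod l) \<longleftrightarrow> int l dvd x - 1"
    using cong[of n] by (simp add: x_def)
  moreover have "l dvd q ^ n + 1 \<longleftrightarrow> int l dvd x + 1"
    unfolding x_def by (metis int_dvd_int_iff of_nat_1 of_nat_add of_nat_power)
  ultimately show ?thesis
    using square not_both ord_divides[where a = q and n = l] by blast
qed

lemma ex_odd_dvd_double_not_dvd_iff:
  fixes e :: nat
  assumes "e > 0"
  shows "(\<exists>j. odd j \<and> e dvd 2 * j \<and> \<not> e dvd j) \<longleftrightarrow> even e \<and> odd (e div 2)"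
proof
  assume "\<exists>j. odd j \<and> e dvd 2 * j \<and> \<not> e dvd j"
  then obtain j where j: "odd j" "e dvd 2 * j" "\<not> e dvd j"
    by blast
  have "even e"
  proof (rule ccontr)
    assume "odd e"
    then have "e dvd j"
      using j(2) coprime_dvd_mult_right_iff[of e 2 j] by simp
    then show False
      using j(3) by blast
  qed
  then obtain d where d: "e = 2 * d" ..
  then have "d dvd j"
    using j(2) by simp
  then have "odd d"
    using j(1) dvd_trans by blast
  then show "even e \<and> odd (e div 2)"
    using d by simp
next
  assume "even e \<and> odd (e div 2)"
  moreover from this have "0 < e div 2" "e div 2 < e"
    using assms odd_pos by auto
  then have "\<not> e dvd e div 2"
    by (auto dest: dvd_imp_le)
  ultimately show "\<exists>j. odd j \<and> e dvd 2 * j \<and> \<not> e dvd j"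
    by (intro exI[of _ "e div 2"]) simp
qed

lemma ex_odd_exponent_dvd_power_plus_1_iff_ord:
  fixes l q :: nat
  assumes "prime l" and "l \<noteq> 2" and "coprime l q"
  shows "(\<exists>j. odd j \<and> l dvd q ^ j + 1) \<longleftrightarrow> \<not> (even (ord l (q ^ 2)) \<or> odd (ord l q))"
proof -
  define e where "e = ord l q"
  have "e > 0"
    using assms(3) by (simp add: e_def)
  have "(\<exists>j. odd j \<and> l dvd q ^ j + 1) \<longleftrightarrow> (\<exists>j. odd j \<and> e dvd 2 * j \<and> \<not> e dvd j)"
    using prime_dvd_power_plus_1_iff_ord[OF assms(1,2)] by (simp add: e_def)
  also have "\<dots> \<longleftrightarrow> even e \<and> odd (e div 2)"
    using \<open>e > 0\<close> by (rule ex_odd_dvd_double_not_dvd_iff)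
  also have "\<dots> \<longleftrightarrow> \<not> (even (ord l (q ^ 2)) \<or> odd (ord l q))"
    using ord_power[OF assms(3), of 2] by (auto simp: e_def gcd.commute[of 2])
  finally show ?thesis .
qed

section \<open>SCRIM factors of \<open>x\<^sup>n - 1\<close>\<close>

lemma coeff_0_neq_0_if_dvd_monom_minus_1:
  fixes f :: "'a::field poly"
  assumes "f dvd monom 1 n - 1" and "n > 0"
  shows "coeff f 0 \<noteq> 0"
proof -
  obtain r where r: "monom 1 n - 1 = f * r"
    using assms(1) by blast
  have "poly (monom 1 n - 1 :: 'a poly) 0 = -1"
    using assms(2) by (simp add: poly_monom)
  then show ?thesis
    unfolding r by (auto simp: poly_0_coeff_0 coeff_mult_0)
qed

lemma SCRIM_factor_imp_prime_dvd_power_plus_1: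
  fixes f :: "'a::{finite,field} poly"
  assumes q: "q = CHAR('a) ^ k" and card: "CARD('a) = q ^ 2"
    and n: "n > 0" "coprime n q"
    and f: "SCRIM q f" "f dvd monom 1 n - 1" "f \<noteq> [:-1, 1:]"
  obtains l j where "prime l" "l dvd n" "odd j" "l dvd q ^ j + 1"
proof -
  have irr: "irreducible f" "lead_coeff f = 1" "coeff f 0 \<noteq> 0"
    using f(1) by (simp_all add: SCRIM_def)
  obtain \<alpha> where \<alpha>: "poly (map_poly to_ac f) \<alpha> = 0" and "\<alpha> ^ n = 1" "\<alpha> \<noteq> 1"
    using nontrivial_root_of_unity_of_factor[OF irr(1,2) f(2,3)] by blast
  then have "\<alpha> \<noteq> 0"
    using n(1) by (auto simp: zero_power)
  have "poly (map_poly to_ac f) (inverse \<alpha> ^ q) = 0"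
    using SCRIM_iff_root_inverse_power[OF q card irr \<alpha>] f(1) by simp
  then obtain i where i: "inverse \<alpha> ^ q = \<alpha> ^ (CARD('a) ^ i)"
    using roots_irreducible_finite_field[of "k * 2", OF _ irr(1) \<alpha>] card q
    by (metis power_mult)
  have "\<alpha> ^ (q ^ (2 * i) + q) = \<alpha> ^ (CARD('a) ^ i) * \<alpha> ^ q"
    by (simp add: card power_add power_mult)
  also have "\<dots> = (inverse \<alpha> * \<alpha>) ^ q"
    by (simp add: i [symmetric] power_mult_distrib)
  finally have "\<alpha> ^ (q ^ (2 * i) + q) = 1"
    using \<open>\<alpha> \<noteq> 0\<close> by simp
  then have "\<alpha> ^ gcd n (q ^ (2 * i) + q) = 1"
    using power_gcd_eq_1 \<open>\<alpha> ^ n = 1\<close> by blast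
  then have "gcd n (q ^ (2 * i) + q) \<noteq> 1"
    using \<open>\<alpha> \<noteq> 1\<close> by auto
  then obtain l where l: "prime l" "l dvd gcd n (q ^ (2 * i) + q)"
    using prime_factor_nat by blast
  moreover have "coprime l q"
    using l n(2) coprime_divisors[of l n q q] by simp
  ultimately obtain j where "odd j" "l dvd q ^ j + 1"
    using dvd_odd_power_plus_1_if_dvd_even_power_plus[of l q i] by auto
  then show thesis
    using that[of l j] l by simp
qed

lemma prime_dvd_power_plus_1_imp_SCRIM_factor:
  assumes q: "q = CHAR('a::{finite,field}) ^ k" "k > 0" and card: "CARD('a) = q ^ 2"
    and n: "n > 0" "coprime n q"
    and l: "prime l" "l dvd n" and j: "odd j" "l dvd q ^ j + 1"
  obtains f :: "'a::{finite,field} poly" where "SCRIM q f" "f dvd monom 1 n - 1" "f \<noteq> [:-1, 1:]"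
proof -
  have "\<not> CHAR('a) dvd l"
  proof
    assume "CHAR('a) dvd l"
    then have "CHAR('a) = l"
      using prime_CHAR_finite_field l(1) primes_dvd_imp_eq by blast
    then have "l dvd q"
      using q dvd_power[of k l] by simp
    then show False
      using l n(2) coprime_common_divisor not_prime_unit by blast
  qed
  then obtain \<alpha> :: "'a alg_closure" where \<alpha>: "\<alpha> ^ l = 1" "\<alpha> \<noteq> 1"
    using nontrivial_root_of_unity_exists[where 'a = "'a alg_closure", of l] l(1) prime_gt_1_nat
    by auto
  then have "\<alpha> ^ n = 1"
    using l(2) by (auto elim!: dvdE simp: power_mult)
  then have root: "poly (map_poly to_ac (monom 1 n - 1)) \<alpha> = 0"
    by (simp add: to_ac.map_poly_diff map_poly_monom poly_monom)
  have "coeff (monom 1 n - 1 :: 'a poly) n = 1"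
    using n(1) by simp
  then have "monom 1 n - 1 \<noteq> (0 :: 'a poly)"
    by (metis coeff_0 zero_neq_one)
  then obtain f where f: "irreducible f" "lead_coeff f = 1" "poly (map_poly to_ac f) \<alpha> = 0"
    and dvd_root: "\<And>p. poly (map_poly to_ac p) \<alpha> = 0 \<Longrightarrow> f dvd p"
    using minimal_polynomial_exists[OF _ root] by blast
  have "coeff f 0 \<noteq> 0"
    using coeff_0_neq_0_if_dvd_monom_minus_1[OF dvd_root[OF root] n(1)] .
  have inverse_power: "inverse \<alpha> ^ q = \<alpha> ^ (CARD('a) ^ Suc (j div 2))"
    using inverse_power_eq_if_dvd_odd_power_plus_1[OF \<alpha>(1) j] card by simp
  have "CARD('a) = CHAR('a) ^ (k * 2)"
    using card q by (simp add: power_mult)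
  then have "poly (map_poly to_ac f) (inverse \<alpha> ^ q)
      = poly (map_poly to_ac f) \<alpha> ^ (CARD('a) ^ Suc (j div 2))"
    unfolding inverse_power by (rule poly_to_ac_power_card_power)
  then have "poly (map_poly to_ac f) (inverse \<alpha> ^ q) = 0"
    using f(3) by (simp add: finite_UNIV_card_ge_0)
  then have "SCRIM q f"
    using SCRIM_iff_root_inverse_power[OF q(1) card f(1,2) \<open>coeff f 0 \<noteq> 0\<close> f(3)] by simp
  moreover have "f \<noteq> [:-1, 1:]"
    using f(3) \<alpha>(2) by (auto simp: map_poly_pCons)
  ultimately show thesis
    using that dvd_root[OF root] by blast
qed

lemma nontrivial_SCRIM_factor_iff:
  assumes "q = CHAR('a::{finite,field}) ^ k" "k > 0" and "CARD('a) = q ^ 2"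
    and "n > 0" "coprime n q"
  shows "(\<exists>f :: 'a poly. SCRIM q f \<and> f dvd monom 1 n - 1 \<and> f \<noteq> [:-1, 1:]) \<longleftrightarrow>
         (\<exists>l j. prime l \<and> l dvd n \<and> odd j \<and> l dvd q ^ j + 1)"
  using SCRIM_factor_imp_prime_dvd_power_plus_1[OF assms(1,3-5)]
    prime_dvd_power_plus_1_imp_SCRIM_factor[OF assms]
  by metis

theorem corollary2p4:
  fixes q n :: nat
  assumes "\<exists>p k. prime p \<and> k > 0 \<and> q = p ^ k"
    and "card (UNIV :: 'a set) = q ^ 2"
    and "odd n" and "n > 0" and "coprime n q"
  shows "{f :: ('a::{finite,field}) poly. SCRIM q f \<and> f dvd (Polynomial.monom 1 n - 1)} = {[:-1, 1:]}
     \<longleftrightarrow> (\<forall>l. prime l \<and> l dvd n \<longrightarrow> even (ord l (q ^ 2)) \<or> odd (ord l q))"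
proof -
  obtain p k where "prime p" "k > 0" and q: "q = p ^ k"
    using assms(1) by blast
  then have "CHAR('a) = p"
    using CHAR_eq_if_card_eq_prime_power[where 'a = 'a, of p "k * 2"] assms(2)
    by (simp add: power_mult)
  then have q_CHAR: "q = CHAR('a) ^ k"
    using q by simp
  have "SCRIM q [:-1, 1 :: 'a:]" "[:-1, 1:] dvd monom 1 n - (1 :: 'a poly)"
    using SCRIM_X_minus_1[OF q_CHAR assms(2)] by (simp_all flip: poly_eq_0_iff_dvd add: poly_monom)
  then have "{f :: 'a poly. SCRIM q f \<and> f dvd monom 1 n - 1} = {[:-1, 1:]} \<longleftrightarrow>
      \<not> (\<exists>f :: 'a poly. SCRIM q f \<and> f dvd monom 1 n - 1 \<and> f \<noteq> [:-1, 1:])"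
    by blast
  also have "\<dots> \<longleftrightarrow> \<not> (\<exists>l j. prime l \<and> l dvd n \<and> odd j \<and> l dvd q ^ j + 1)"
    using nontrivial_SCRIM_factor_iff[OF q_CHAR \<open>k > 0\<close> assms(2,4,5)] by simp
  also have "\<dots> \<longleftrightarrow> (\<forall>l. prime l \<and> l dvd n \<longrightarrow> even (ord l (q ^ 2)) \<or> odd (ord l q))"
  proof -
    have "l \<noteq> 2" "coprime l q" if "l dvd n" for l
      using that assms(3,5) coprime_imp_coprime dvd_trans by auto
    then show ?thesis
      using ex_odd_exponent_dvd_power_plus_1_iff_ord by blast
  qed
  finally show ?thesis .
qed

end
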